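(* For an integer $\ell\ge 1$ and $1\le u\le \ell^3$ let $c_u(\ell):=\#\{(a,b,c)\in\{1,\dots,\ell\}^3:\ abc=u\}$, and set $$C_3(\ell):=\sum_{\substack{u,v\le \ell^3\\ uv \text{ is a perfect square}}} c_u(\ell)c_v(\ell).$$ Then for every $\delta>0$ one has $C_3(m)\ll_\delta m^{3+\delta}$ for all integers $m\ge 1$.
   Context: $f\ll_\delta g$ means $|f|\le C g$ for a constant $C$ depending only on $\delta$ (for all sufficiently large $m$). *)

theory Defs
  imports Complex_Main
begin

definition cnt :: "nat \<Rightarrow> nat \<Rightarrow> nat" where
  "cnt l u = card {(a,b,c). a \<in> {1..l} \<and> b \<in> {1..l} \<and> c \<in> {1..l} \<and> a*b*c = u}"

definition is_square :: "nat \<Rightarrow> bool" where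
  "is_square n \<longleftrightarrow> (\<exists>k. n = k^2)"

definition C3 :: "nat \<Rightarrow> nat" where
  "C3 l = (\<Sum>(u,v) \<in> {(u,v). u \<in> {1..l^3} \<and> v \<in> {1..l^3} \<and> is_square (u*v)}.
              cnt l u * cnt l v)"

end

theory Submission
  imports Defs "HOL-Computational_Algebra.Primes"
begin

text \<open>
  The divisor function satisfies d(n) \<le> K n^e: in d(n) / n^e = prod_p (k_p + 1) / p^(k_p e)
  the factor of a prime p \<ge> exp (1/e) is at most 1, and each of the finitely many smaller
  primes contributes a bounded factor. A triple (a, b, c) with abc = u is determined by the
  divisors a, b of u, so c_u \<le> d(u)^2; a pair (u, v) with uv = k^2 is determined by
  k \<le> m^3 and the divisor u of k^2. Hence C_3(m) \<le> m^3 D^5, where D bounds d on [1, m^6],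
  and D \<le> K m^(6e).
\<close>

definition divisor_count :: "nat \<Rightarrow> nat" where
  "divisor_count n = card {d. d dvd n}"

lemma divisor_count_prime_power_mult_le:
  fixes p m k :: nat
  assumes p: "prime p" and not_dvd: "\<not> p dvd m"
  shows "divisor_count (p ^ k * m) \<le> (k + 1) * divisor_count m"
proof -
  let ?split = "\<lambda>d. (multiplicity p d, d div p ^ multiplicity p d)"
  have m: "m \<noteq> 0" using not_dvd by (metis dvd_0_right)
  have not_unit: "\<not> is_unit p" using p not_prime_unit by blast
  have mult_pkm: "multiplicity p (p ^ k * m) = k"
    using p not_dvd by (intro multiplicity_decomposeI) auto
  have inj: "inj_on ?split {d. d dvd p ^ k * m}"
    by (rule inj_onI) (metis fst_conv snd_conv multiplicity_dvd dvd_mult_div_cancel)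
  have range: "?split ` {d. d dvd p ^ k * m} \<subseteq> {0..k} \<times> {d. d dvd m}"
  proof
    fix z assume "z \<in> ?split ` {d. d dvd p ^ k * m}"
    then obtain d where d: "d dvd p ^ k * m" and z: "z = ?split d" by auto
    let ?r = "d div p ^ multiplicity p d"
    have pkm: "p ^ k * m \<noteq> 0" using m p by (simp add: prime_gt_0_nat)
    have "p ^ multiplicity p d dvd p ^ k * m" using multiplicity_dvd d dvd_trans by blast
    then have "multiplicity p d \<le> k"
      using multiplicity_geI[OF pkm not_unit] mult_pkm by simp
    moreover have "?r dvd m"
    proof -
      have "d \<noteq> 0" using d pkm by (metis dvd_0_left)
      then have "\<not> p dvd ?r" using multiplicity_decompose not_unit by blast
      then have "coprime ?r (p ^ k)" using p by (simp add: prime_imp_coprime coprime_commute)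
      moreover have "?r dvd p ^ k * m"
        using d by (metis dvd_div_mult_self dvd_triv_left multiplicity_dvd dvd_trans)
      ultimately show ?thesis using coprime_dvd_mult_right_iff by blast
    qed
    ultimately show "z \<in> {0..k} \<times> {d. d dvd m}" using z by simp
  qed
  have "divisor_count (p ^ k * m) = card (?split ` {d. d dvd p ^ k * m})"
    using inj by (simp add: divisor_count_def card_image)
  also have "\<dots> \<le> card ({0..k} \<times> {d. d dvd m})"
    using range m by (intro card_mono) auto
  also have "\<dots> = (k + 1) * divisor_count m"
    by (simp add: divisor_count_def card_cartesian_product)
  finally show ?thesis .
qed

lemma of_nat_add_one_le_powr:
  fixes e x :: real and k :: nat
  assumes e: "e > 0" and x: "x > 1"
  shows "real k + 1 \<le> max 1 (1 / (e * ln x)) * x powr (real k * e)"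
proof -
  define a where "a = e * ln x"
  have a: "a > 0" using e x by (simp add: a_def)
  have "real k + 1 \<le> max 1 (1 / a) * (1 + real k * a)"
  proof (cases "a \<ge> 1")
    case True
    then show ?thesis using mult_left_mono[of 1 a "real k"] by simp
  next
    case False
    then have "real k + 1 \<le> 1 / a * (1 + real k * a)" using a by (simp add: field_simps)
    moreover have "max 1 (1 / a) = 1 / a" using False a by simp
    ultimately show ?thesis by simp
  qed
  also have "\<dots> \<le> max 1 (1 / a) * exp (real k * a)"
    using exp_ge_add_one_self by (intro mult_left_mono) auto
  also have "exp (real k * a) = x powr (real k * e)"
    using x by (simp add: powr_def a_def mult.commute mult.left_commute)
  finally show ?thesis by (simp add: a_def)
qed

lemma prime_power_cofactor_split:
  fixes n :: nat
  assumes "n > 1"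
  obtains p k m where "prime p" "k \<ge> 1" "\<not> p dvd m" "n = p ^ k * m"
proof -
  obtain p where p: "prime p" "p dvd n" using assms prime_factor_nat by (metis less_irrefl)
  have n0: "n \<noteq> 0" using assms by simp
  have not_unit: "\<not> is_unit p" using p not_prime_unit by blast
  show ?thesis
  proof (rule that[of p "multiplicity p n" "n div p ^ multiplicity p n"])
    show "multiplicity p n \<ge> 1" using multiplicity_geI[OF n0 not_unit, of 1] p by simp
    show "\<not> p dvd n div p ^ multiplicity p n" using multiplicity_decompose[OF n0 not_unit] .
    show "n = p ^ multiplicity p n * (n div p ^ multiplicity p n)"
      by (metis dvd_mult_div_cancel multiplicity_dvd)
  qed (use p in simp)
qed

lemma divisor_count_le_prod_prime_factors:
  fixes e :: real and n :: nat
  assumes e: "e > 0" and n: "n > 0"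
  shows "real (divisor_count n)
           \<le> (\<Prod>p\<in>prime_factors n. max 1 (1 / (e * ln (real p)))) * real n powr e"
  using n
proof (induction n rule: less_induct)
  case (less n)
  define g where "g p = max 1 (1 / (e * ln (real p)))" for p :: nat
  show ?case
  proof (cases "n = 1")
    case True
    then show ?thesis by (simp add: divisor_count_def)
  next
    case False
    with less.prems have "n > 1" by simp
    then obtain p k m where p: "prime p" and k: "k \<ge> 1" and not_dvd: "\<not> p dvd m"
      and n_eq: "n = p ^ k * m"
      by (rule prime_power_cofactor_split)
    have m0: "m > 0" using not_dvd by (metis dvd_0_right gr0I)
    have p2: "p \<ge> 2" using p prime_ge_2_nat by blast
    have "p ^ k > 1" using p2 k by (intro one_less_power) auto
    then have "m < n" using n_eq m0 by simp
    then have IH: "real (divisor_count m) \<le> (\<Prod>q\<in>prime_factors m. g q) * real m powr e"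
      using less.IH m0 by (simp add: g_def)
    have "prime_factors n = insert p (prime_factors m)"
      using n_eq p k m0 by (simp add: prime_factors_product prime_factorization_prime_power)
    moreover have "p \<notin> prime_factors m" using not_dvd by (auto dest: prime_factors_dvd)
    ultimately have prod_eq: "(\<Prod>q\<in>prime_factors n. g q) = g p * (\<Prod>q\<in>prime_factors m. g q)"
      by simp
    have n_powr: "real n powr e = real p powr (real k * e) * real m powr e"
      using n_eq p2 by (simp add: powr_mult powr_powr powr_realpow[symmetric])
    have "real (divisor_count n) \<le> (real k + 1) * real (divisor_count m)"
      using divisor_count_prime_power_mult_le[OF p not_dvd, of k] n_eq
      by (metis of_nat_Suc of_nat_le_iff of_nat_mult Suc_eq_plus1 add.commute)
    also have "\<dots> \<le> (g p * real p powr (real k * e)) * ((\<Prod>q\<in>prime_factors m. g q) * real m powr e)"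
      using of_nat_add_one_le_powr[OF e, of "real p" k] p2 IH unfolding g_def
      by (intro mult_mono) auto
    also have "\<dots> = (\<Prod>q\<in>prime_factors n. g q) * real n powr e"
      by (simp add: prod_eq n_powr)
    finally show ?thesis by (simp add: g_def)
  qed
qed

lemma divisor_count_le_powr:
  fixes e :: real
  assumes e: "e > 0"
  shows "\<exists>K\<ge>1. \<forall>n>0. real (divisor_count n) \<le> K * real n powr e"
proof -
  define g where "g p = max 1 (1 / (e * ln (real p)))" for p :: nat
  define P where "P = nat \<lceil>exp (1 / e)\<rceil>"
  have g_large: "g p = 1" if "p \<ge> P" for p
  proof -
    have "exp (1 / e) \<le> real p" using that unfolding P_def by linarith
    then have "1 / e \<le> ln (real p)" by (metis exp_gt_zero less_le_trans ln_exp ln_le_cancel_iff)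
    then have "1 \<le> e * ln (real p)" using e by (simp add: field_simps)
    then show ?thesis by (simp add: g_def)
  qed
  have "(\<Prod>p\<in>prime_factors n. g p) \<le> (\<Prod>p<P. g p)" for n
  proof -
    have "(\<Prod>p\<in>prime_factors n. g p) = (\<Prod>p\<in>prime_factors n \<inter> {..<P}. g p)"
      by (intro prod.mono_neutral_right) (auto, use g_large not_le in blast)
    also have "\<dots> \<le> (\<Prod>p<P. g p)"
      by (intro prod_mono2) (auto simp: g_def)
    finally show ?thesis .
  qed
  then have "real (divisor_count n) \<le> (\<Prod>p<P. g p) * real n powr e" if "n > 0" for n
    using divisor_count_le_prod_prime_factors[OF e that] unfolding g_def[symmetric]
    by (meson mult_right_mono order_trans powr_ge_zero)
  moreover have "(\<Prod>p<P. g p) \<ge> 1" by (intro prod_ge_1) (simp add: g_def)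
  ultimately show ?thesis by blast
qed

lemma cnt_le_divisor_count_sq:
  assumes u: "u > 0"
  shows "cnt l u \<le> divisor_count u ^ 2"
proof -
  let ?T = "{(a,b,c). a \<in> {1..l} \<and> b \<in> {1..l} \<and> c \<in> {1..l} \<and> a * b * c = u}"
  let ?D = "{d. d dvd u}"
  have "inj_on (\<lambda>(a,b,c). (a,b)) ?T"
    by (auto simp: inj_on_def)
  then have "cnt l u = card ((\<lambda>(a,b,c). (a,b)) ` ?T)"
    unfolding cnt_def by (simp add: card_image)
  also have "\<dots> \<le> card (?D \<times> ?D)"
    using u by (intro card_mono) (auto intro: dvd_mult dvd_mult2)
  also have "\<dots> = divisor_count u ^ 2"
    by (simp add: divisor_count_def card_cartesian_product power2_eq_square)
  finally show ?thesis .
qed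

definition square_product_pairs :: "nat \<Rightarrow> (nat \<times> nat) set" where
  "square_product_pairs N = {(u,v). u \<in> {1..N} \<and> v \<in> {1..N} \<and> is_square (u * v)}"

lemma C3_eq_sum_square_product_pairs:
  "C3 l = (\<Sum>(u,v)\<in>square_product_pairs (l ^ 3). cnt l u * cnt l v)"
  by (simp add: C3_def square_product_pairs_def)

lemma C3_le_card_square_product_pairs:
  assumes cnt_le: "\<And>u. u \<in> {1..l ^ 3} \<Longrightarrow> real (cnt l u) \<le> B"
  shows "real (C3 l) \<le> real (card (square_product_pairs (l ^ 3))) * B ^ 2"
proof -
  have "real (C3 l) = (\<Sum>(u,v)\<in>square_product_pairs (l ^ 3). real (cnt l u) * real (cnt l v))"
    by (simp add: C3_eq_sum_square_product_pairs case_prod_beta)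
  also have "\<dots> \<le> (\<Sum>_\<in>square_product_pairs (l ^ 3). B ^ 2)"
  proof (intro sum_mono, clarify)
    fix u v assume "(u, v) \<in> square_product_pairs (l ^ 3)"
    then have "u \<in> {1..l ^ 3}" "v \<in> {1..l ^ 3}" by (auto simp: square_product_pairs_def)
    then show "real (cnt l u) * real (cnt l v) \<le> B ^ 2"
      using cnt_le by (simp add: power2_eq_square mult_mono')
  qed
  finally show ?thesis by simp
qed

lemma card_square_product_pairs_le:
  "card (square_product_pairs N) \<le> (\<Sum>k=1..N. divisor_count (k ^ 2))"
proof -
  let ?A = "\<lambda>k. (\<lambda>u. (u, k ^ 2 div u)) ` {d. d dvd k ^ 2}"
  have "square_product_pairs N \<subseteq> (\<Union>k\<in>{1..N}. ?A k)"
  proof clarify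
    fix u v assume uv: "(u, v) \<in> square_product_pairs N"
    then obtain k where k: "u * v = k ^ 2"
      by (auto simp: square_product_pairs_def is_square_def)
    have "u * v \<le> N * N" "u * v > 0"
      using uv by (auto simp: square_product_pairs_def intro: mult_le_mono)
    then have "k ^ 2 \<le> N ^ 2" "k > 0"
      using k by (auto simp: power2_eq_square)
    then have "k \<in> {1..N}"
      using power_le_imp_le_base by auto
    moreover have "(u, v) \<in> ?A k"
      using k \<open>u * v > 0\<close> by (auto intro: image_eqI[of _ _ u] simp: k[symmetric])
    ultimately show "(u, v) \<in> (\<Union>k\<in>{1..N}. ?A k)" by blast
  qed
  then have "card (square_product_pairs N) \<le> card (\<Union>k\<in>{1..N}. ?A k)"
    by (intro card_mono) auto
  also have "\<dots> \<le> (\<Sum>k=1..N. card (?A k))"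
    by (rule card_UN_le) simp
  also have "\<dots> \<le> (\<Sum>k=1..N. divisor_count (k ^ 2))"
    unfolding divisor_count_def by (intro sum_mono card_image_le) auto
  finally show ?thesis .
qed

lemma C3_le_divisor_count_bound:
  assumes divisor_count_le: "\<And>n. 0 < n \<Longrightarrow> n \<le> l ^ 6 \<Longrightarrow> real (divisor_count n) \<le> B"
  shows "real (C3 l) \<le> real l ^ 3 * B ^ 5"
proof -
  have "real (cnt l u) \<le> B ^ 2" if u: "u \<in> {1..l ^ 3}" for u
  proof -
    have "u \<le> l ^ 6" using u power_increasing[of 3 6 l] by (cases "l = 0") auto
    then have "real (divisor_count u) ^ 2 \<le> B ^ 2"
      using u divisor_count_le by (intro power_mono) auto
    moreover have "cnt l u \<le> divisor_count u ^ 2" using u by (intro cnt_le_divisor_count_sq) simp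
    ultimately show ?thesis by (metis of_nat_le_iff of_nat_power order_trans)
  qed
  then have "real (C3 l) \<le> real (card (square_product_pairs (l ^ 3))) * (B ^ 2) ^ 2"
    by (rule C3_le_card_square_product_pairs)
  also have "\<dots> \<le> (real l ^ 3 * B) * (B ^ 2) ^ 2"
  proof -
    have "real (divisor_count (k ^ 2)) \<le> B" if k: "k \<in> {1..l ^ 3}" for k
      using k divisor_count_le[of "k ^ 2"] power_mono[of k "l ^ 3" 2] by (simp flip: power_mult)
    then have "(\<Sum>k=1..l ^ 3. real (divisor_count (k ^ 2))) \<le> (\<Sum>k=1..l ^ 3. B)"
      by (rule sum_mono)
    moreover have "real (card (square_product_pairs (l ^ 3))) \<le> (\<Sum>k=1..l ^ 3. real (divisor_count (k ^ 2)))"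
      using card_square_product_pairs_le by (metis of_nat_le_iff of_nat_sum)
    ultimately show ?thesis by (intro mult_right_mono) auto
  qed
  also have "\<dots> = real l ^ 3 * B ^ 5" by algebra
  finally show ?thesis .
qed

theorem lemma2p3:
  fixes \<delta> :: real
  assumes "\<delta> > 0"
  shows "\<exists>C::real. \<forall>m::nat. m \<ge> 1 \<longrightarrow> real (C3 m) \<le> C * real m powr (3 + \<delta>)"
proof -
  define e where "e = \<delta> / 30"
  have e: "e > 0" using assms by (simp add: e_def)
  obtain K where "K \<ge> 1" and K: "\<forall>n>0. real (divisor_count n) \<le> K * real n powr e"
    using divisor_count_le_powr[OF e] by blast
  show ?thesis
  proof (intro exI[of _ "K ^ 5"] allI impI)
    fix m :: nat assume "m \<ge> 1"
    then have m: "real m > 0" by simp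
    define B where "B = K * real m powr (6 * e)"
    have "real (divisor_count n) \<le> B" if "0 < n" "n \<le> m ^ 6" for n
    proof -
      have "real n powr e \<le> real (m ^ 6) powr e" using that e by (intro powr_mono2) auto
      also have "\<dots> = real m powr (6 * e)"
        unfolding of_nat_power powr_realpow[OF m, of 6, symmetric] powr_powr by simp
      finally show ?thesis using K that \<open>K \<ge> 1\<close> unfolding B_def
        by (meson mult_left_mono order_trans zero_le_one)
    qed
    then have "real (C3 m) \<le> real m ^ 3 * B ^ 5" by (rule C3_le_divisor_count_bound)
    also have "\<dots> = K ^ 5 * (real m powr 3 * real m powr (30 * e))"
      using m by (simp add: B_def power_mult_distrib powr_power powr_realpow)
    also have "\<dots> = K ^ 5 * real m powr (3 + \<delta>)"
      unfolding powr_add[symmetric] e_def by simp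
    finally show "real (C3 m) \<le> K ^ 5 * real m powr (3 + \<delta>)" .
  qed
qed

end
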